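(* Let $g\in F$. Then there exists $m\in\mathbb{N}$ such that for every $t\in(0,2^{-m})\cap S_0$ one has $\omega(t)\equiv\omega(g(t))\pmod 3$. Here $$S_0=\{t\in(0,1)\cap\mathbb{Z}[1/2]:\omega(t)=0,\ |t|\text{ even}\}.$$
   Context: Thompson's group $F$ is the group of piecewise linear homeomorphisms of $[0,1]$ that are differentiable except at finitely many dyadic rationals with slopes in $2^{\mathbb{Z}}$; $g(t)$ denotes the image of $t$ under $g$. The weight $\omega$ on finite binary words is defined by triples with - $(L,R,B)(\emptyset)=(0,1,2)$, - $(L,R,B)(z0)=(L(z),B(z),R(z))$, - $(L,R,B)(z1)=(B(z),R(z),L(z))$, and $\omega(z)=L(z)\in\mathbb{Z}_3$. This is the color of the region left of vertex $z$ (path word, $0$ = left, $1$ = right) in the proper $3$-coloring of the complement of the infinite rooted planar binary tree with the regions left of, right of and below the root colored $0,1,2$. For a dyadic rational $t\in(0,1)$, write $t=.a_1\cdots a_n$ for its terminating binary expansion with $a_n=1$, and set $|t|=n$ and $\omega(t)=\omega(a_1\cdots a_n)$. *)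

theory Defs
  imports Complex_Main
begin

definition dyadic :: "real \<Rightarrow> bool" where
  "dyadic t \<longleftrightarrow> (\<exists>(a::int) (n::nat). t = of_int a / 2 ^ n)"

definition thompsonF :: "(real \<Rightarrow> real) set" where
  "thompsonF = {g. bij_betw g {0..1} {0..1} \<and>
     (\<exists>xs :: real list. length xs \<ge> 2 \<and> hd xs = 0 \<and> last xs = 1 \<and> sorted_wrt (<) xs \<and>
        (\<forall>x\<in>set xs. dyadic x) \<and>
        (\<forall>i. Suc i < length xs \<longrightarrow>
           (\<exists>(k::int) (b::real). \<forall>t\<in>{xs!i .. xs!Suc i}. g t = 2 powi k * t + b)))}"

text \<open>Colour weight on finite binary words (False = 0 = left, True = 1 = right).\<close>
fun col_step :: "nat \<times> nat \<times> nat \<Rightarrow> bool \<Rightarrow> nat \<times> nat \<times> nat" where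
  "col_step (L, R, B) False = (L, B, R)"
| "col_step (L, R, B) True = (B, R, L)"

definition LRB :: "bool list \<Rightarrow> nat \<times> nat \<times> nat" where
  "LRB z = foldl col_step (0, 1, 2) z"

definition omega_word :: "bool list \<Rightarrow> nat" where
  "omega_word z = fst (LRB z)"

definition dlen :: "real \<Rightarrow> nat" where
  "dlen t = (LEAST n. \<exists>a::int. t = of_int a / 2 ^ n)"

definition bin_word :: "real \<Rightarrow> bool list" where
  "bin_word t = map (\<lambda>i. odd \<lfloor>t * 2 ^ Suc i\<rfloor>) [0..<dlen t]"

definition omega :: "real \<Rightarrow> nat" where
  "omega t = omega_word (bin_word t)"

definition S0 :: "real set" where
  "S0 = {t. 0 < t \<and> t < 1 \<and> dyadic t \<and> omega t = 0 \<and> even (dlen t)}"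

end

theory Submission
  imports Defs "HOL-Combinatorics.Transposition"
begin

text \<open>Prepending a 0 to a binary word, i.e. halving t, relabels the colouring of the tree by
  the transposition of the colours 1 and 2, which fixes the colour 0; so \<omega>(2 t) = 0 iff
  \<omega>(t) = 0. Near 0 every element of F is t \<mapsto> 2^k t and therefore preserves the weight 0.\<close>

lemma foldl_col_step_map:
  "foldl col_step (f a, f b, f c) w = map_prod f (map_prod f f) (foldl col_step (a, b, c) w)"
proof (induction w arbitrary: a b c)
  case (Cons x w)
  then show ?case by (cases x) simp_all
qed simp

lemma omega_word_Cons_False: "omega_word (False # w) = transpose 1 2 (omega_word w)"
proof -
  have "omega_word (False # w) =
      fst (foldl col_step (transpose 1 2 0, transpose 1 2 1, transpose 1 2 2) w)"
    by (simp add: omega_word_def LRB_def)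
  then show ?thesis
    unfolding foldl_col_step_map by (simp add: omega_word_def LRB_def map_prod_def split_beta)
qed

lemma dyadic_mult_2: "dyadic s \<Longrightarrow> dyadic (2 * s)"
  unfolding dyadic_def by (metis mult_of_int_commute of_int_mult of_int_numeral times_divide_eq_right)

lemma dyadic_divide_power: "dyadic s \<Longrightarrow> dyadic (s / 2 ^ k)"
  unfolding dyadic_def by (metis divide_divide_eq_left power_add)

lemma dlen_double:
  assumes "dyadic s" "0 < s" "s < 1"
  shows "dlen s = Suc (dlen (2 * s))"
proof -
  obtain a :: int and n :: nat where "s = of_int a / 2 ^ n"
    using assms(1) unfolding dyadic_def by blast
  moreover have "\<nexists>a::int. s = of_int a / 2 ^ 0"
    using assms(2,3) by auto
  ultimately have "dlen s = Suc (LEAST m. \<exists>a::int. s = of_int a / 2 ^ Suc m)"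
    unfolding dlen_def by (intro Least_Suc) auto
  also have "(\<lambda>m. \<exists>a::int. s = of_int a / 2 ^ Suc m) = (\<lambda>m. \<exists>a::int. 2 * s = of_int a / 2 ^ m)"
    by (auto simp: fun_eq_iff field_simps)
  finally show ?thesis
    unfolding dlen_def .
qed

lemma bin_word_double:
  assumes "dyadic s" "0 < s" "s < 1/2"
  shows "bin_word s = False # bin_word (2 * s)"
proof -
  have "\<lfloor>s * 2\<rfloor> = 0"
    using assms by (simp add: floor_eq_iff)
  moreover have "[0..<Suc (dlen (2 * s))] = 0 # map Suc [0..<dlen (2 * s)]"
    by (simp add: map_Suc_upt upt_conv_Cons)
  ultimately show ?thesis
    using assms by (simp add: bin_word_def dlen_double ac_simps)
qed

lemma omega_double_eq_0_iff:
  assumes "dyadic s" "0 < s" "s < 1/2"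
  shows "omega (2 * s) = 0 \<longleftrightarrow> omega s = 0"
  unfolding omega_def bin_word_double[OF assms] omega_word_Cons_False
  by (auto simp: transpose_eq_iff)

lemma omega_mult_power_eq_0_iff:
  assumes "dyadic s" "0 < s" "2 ^ n * s < 1"
  shows "omega (2 ^ n * s) = 0 \<longleftrightarrow> omega s = 0"
  using assms
proof (induction n arbitrary: s)
  case (Suc n)
  have "2 * s \<le> 2 ^ Suc n * s"
    using Suc.prems by (intro mult_right_mono) auto
  then have "s < 1/2"
    using Suc.prems by linarith
  have "2 ^ Suc n * s = 2 ^ n * (2 * s)"
    by simp
  then have "omega (2 ^ Suc n * s) = 0 \<longleftrightarrow> omega (2 * s) = 0"
    using Suc.prems by (metis Suc.IH dyadic_mult_2 mult_pos_pos zero_less_numeral)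
  also have "\<dots> \<longleftrightarrow> omega s = 0"
    using Suc.prems \<open>s < 1/2\<close> by (intro omega_double_eq_0_iff)
  finally show ?case .
qed simp

lemma omega_mult_powi_eq_0_iff:
  assumes "dyadic t" "0 < t" "t < 1" "2 powi k * t < 1"
  shows "omega (2 powi k * t) = 0 \<longleftrightarrow> omega t = 0"
proof (cases "k \<ge> 0")
  case True
  then have "(2::real) powi k = 2 ^ nat k"
    by (metis power_int_of_nat int_nat_eq)
  then show ?thesis
    using assms omega_mult_power_eq_0_iff by simp
next
  case False
  define n where "n = nat (- k)"
  then have "(2::real) powi k = 1 / 2 ^ n"
    using False by (simp add: power_int_def power_one_over)
  moreover have "omega (2 ^ n * (t / 2 ^ n)) = 0 \<longleftrightarrow> omega (t / 2 ^ n) = 0"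
    using assms by (intro omega_mult_power_eq_0_iff dyadic_divide_power) auto
  ultimately show ?thesis
    by simp
qed

lemma piecewise_increasing_ge_first:
  fixes g :: "real \<Rightarrow> real" and xs :: "real list"
  assumes "sorted xs"
    and pieces: "\<And>i. Suc i < length xs \<Longrightarrow>
      \<exists>c b. 0 < c \<and> (\<forall>t\<in>{xs!i .. xs!Suc i}. g t = c * t + b)"
  shows "i < length xs \<Longrightarrow> u \<in> {xs!0 .. xs!i} \<Longrightarrow> g (xs!0) \<le> g u"
proof (induction i arbitrary: u)
  case (Suc i)
  show ?case
  proof (cases "u \<le> xs!i")
    case True
    then show ?thesis
      using Suc by simp
  next
    case False
    obtain c b where "0 < c" and affine: "\<forall>t\<in>{xs!i .. xs!Suc i}. g t = c * t + b"
      using pieces Suc.prems(1) by blast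
    have "g (xs!0) \<le> g (xs!i)"
      using Suc \<open>sorted xs\<close> by (simp add: sorted_nth_mono)
    also have "\<dots> \<le> g u"
      using affine False Suc.prems(2) \<open>0 < c\<close> by simp
    finally show ?thesis .
  qed
qed simp

lemma thompsonF_E:
  assumes "g \<in> thompsonF"
  obtains xs :: "real list" where "bij_betw g {0..1} {0..1}"
    and "length xs \<ge> 2" "xs!0 = 0" "xs!(length xs - 1) = 1" "sorted_wrt (<) xs"
    and "\<And>i. Suc i < length xs \<Longrightarrow>
      \<exists>k::int. \<exists>b. \<forall>t\<in>{xs!i .. xs!Suc i}. g t = 2 powi k * t + b"
proof -
  obtain xs :: "real list" where "bij_betw g {0..1} {0..1}"
    and len: "length xs \<ge> 2" and "hd xs = 0" "last xs = 1" "sorted_wrt (<) xs"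
    and "\<forall>i. Suc i < length xs \<longrightarrow>
      (\<exists>k::int. \<exists>b. \<forall>t\<in>{xs!i .. xs!Suc i}. g t = 2 powi k * t + b)"
    using assms unfolding thompsonF_def by blast
  moreover have "xs \<noteq> []"
    using len by auto
  ultimately show ?thesis
    using that by (simp add: hd_conv_nth last_conv_nth)
qed

lemma thompsonF_fixes_0:
  assumes "g \<in> thompsonF"
  shows "g 0 = 0"
proof -
  obtain xs :: "real list" where bij: "bij_betw g {0..1} {0..1}"
    and xs: "length xs \<ge> 2" "xs!0 = 0" "xs!(length xs - 1) = 1" "sorted_wrt (<) xs"
    and pieces: "\<And>i. Suc i < length xs \<Longrightarrow>
      \<exists>k::int. \<exists>b. \<forall>t\<in>{xs!i .. xs!Suc i}. g t = 2 powi k * t + b"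
    using assms by (elim thompsonF_E) blast
  have "sorted xs"
    using xs(4) strict_sorted_imp_sorted by blast
  moreover have "\<exists>c b. 0 < c \<and> (\<forall>t\<in>{xs!i .. xs!Suc i}. g t = c * t + b)"
    if i: "Suc i < length xs" for i
  proof -
    obtain k b where "\<forall>t\<in>{xs!i .. xs!Suc i}. g t = 2 powi k * t + b"
      using pieces[OF i] by blast
    then show ?thesis
      by (intro exI[of _ "2 powi k"] exI[of _ b]) simp
  qed
  ultimately have "g 0 \<le> g u" if "u \<in> {0..1}" for u
    using piecewise_increasing_ge_first[of xs g "length xs - 1" u] xs that by simp
  moreover have "0 \<in> g ` {0..1}"
    using bij_betw_imp_surj_on[OF bij] by simp
  moreover have "0 \<le> g 0"
    using bij_betw_apply[OF bij, of 0] by simp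
  ultimately show ?thesis
    by force
qed

lemma thompsonF_linear_near_0:
  assumes "g \<in> thompsonF"
  obtains \<epsilon> k where "0 < \<epsilon>" "\<epsilon> \<le> 1" "\<forall>t\<in>{0..\<epsilon>}. g t = 2 powi k * t"
proof -
  obtain xs :: "real list" where
    xs: "length xs \<ge> 2" "xs!0 = 0" "xs!(length xs - 1) = 1" "sorted_wrt (<) xs"
    and pieces: "\<And>i. Suc i < length xs \<Longrightarrow>
      \<exists>k::int. \<exists>b. \<forall>t\<in>{xs!i .. xs!Suc i}. g t = 2 powi k * t + b"
    using assms by (elim thompsonF_E) blast
  have "0 < xs!1"
    using sorted_wrt_nth_less[OF xs(4), of 0 1] xs(1,2) by simp
  have "xs!1 \<le> 1"
    using sorted_nth_mono[OF strict_sorted_imp_sorted[OF xs(4)], of 1 "length xs - 1"] xs(1,3)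
    by simp
  obtain k b where affine: "\<forall>t\<in>{0 .. xs!1}. g t = 2 powi k * t + b"
    using pieces[of 0] xs by auto
  have "b = 0"
    using affine[rule_format, of 0] \<open>0 < xs!1\<close> thompsonF_fixes_0[OF assms] by simp
  then show ?thesis
    using \<open>0 < xs!1\<close> \<open>xs!1 \<le> 1\<close> affine by (intro that[of "xs!1" k]) auto
qed

theorem lemma2p12:
  assumes "g \<in> thompsonF"
  shows "\<exists>m::nat. \<forall>t\<in>S0. t < 1 / 2 ^ m \<longrightarrow> omega t = omega (g t)"
proof -
  obtain \<epsilon> k where "0 < \<epsilon>" "\<epsilon> \<le> 1" and linear: "\<forall>t\<in>{0..\<epsilon>}. g t = 2 powi k * t"
    using thompsonF_linear_near_0[OF assms] by blast
  have "bij_betw g {0..1} {0..1}"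
    using assms unfolding thompsonF_def by blast
  then have "g \<epsilon> \<le> 1"
    using \<open>0 < \<epsilon>\<close> \<open>\<epsilon> \<le> 1\<close> bij_betw_apply by fastforce
  obtain m where "(1/2::real) ^ m < \<epsilon>"
    using real_arch_pow_inv[OF \<open>0 < \<epsilon>\<close>, of "1/2"] by auto
  have "omega t = omega (g t)" if "t \<in> S0" "t < 1 / 2 ^ m" for t
  proof -
    have t: "0 < t" "t < 1" "dyadic t" "omega t = 0" "t < \<epsilon>"
      using that \<open>(1/2) ^ m < \<epsilon>\<close> by (auto simp: S0_def power_one_over)
    have "2 powi k * t < 2 powi k * \<epsilon>"
      using t by simp
    also have "\<dots> \<le> 1"
      using linear \<open>g \<epsilon> \<le> 1\<close> \<open>0 < \<epsilon>\<close> by simp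
    finally show ?thesis
      using t linear omega_mult_powi_eq_0_iff[of t k] by simp
  qed
  then show ?thesis
    by blast
qed

end
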